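(* Let $\Gamma$ be a labeled oriented tree of Coxeter type with at least $3$ vertices, let $\Upsilon$ be its associated Coxeter tree, and assume that all edge labels $m_e$ of $\Upsilon$ satisfy $m_e\ge 3$. Then $G(\Gamma)$ is large.
   Context: A labeled oriented tree (LOT) $\Gamma$ is a finite tree with vertex set $\mathbf{x}$ whose edges are oriented and each edge is labeled by a (possibly empty) word $w$ in $\mathbf{x}^{\pm1}$; for the edge $e=(x\xrightarrow{w}y)$ set $r_e=xw(wy)^{-1}$; $G(\Gamma)=\langle\mathbf{x}\mid r_e,\ e\text{ an edge}\rangle$. $\Gamma$ is of Coxeter type if for every edge $e=(x\xrightarrow{w}y)$ every letter $z\ne x,y$ occurs in $w$ only with even exponents. For such $\Gamma$, each $r_e$ reduces, up to cyclic permutation, in $\langle\mathbf{x}\mid x^2,x\in\mathbf{x}\rangle$ to $(yx)^{m_e}$ with $m_e\ge1$ odd; the associated Coxeter tree $\Upsilon$ is obtained from $\Gamma$ by erasing orientations and edge words and labeling each edge $e$ by $m_e$. A group is large if it has a subgroup of finite index that admits an epimorphism onto a free group of rank $\ge 2$. *)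

theory Defs
  imports "HOL-Algebra.Algebra"
begin

text \<open>A letter is a pair (generator, inverted?); (a, False) is a, (a, True) is a^-1.\<close>

type_synonym 'a word = "('a \<times> bool) list"

definition cancels :: "'a \<times> bool \<Rightarrow> 'a \<times> bool \<Rightarrow> bool" where
  "cancels p q \<longleftrightarrow> fst p = fst q \<and> snd p \<noteq> snd q"

fun fred :: "'a word \<Rightarrow> 'a word" where
  "fred [] = []"
| "fred (a # as) = (case fred as of [] \<Rightarrow> [a] | b # bs \<Rightarrow> (if cancels a b then bs else a # b # bs))"

definition inv_word :: "'a word \<Rightarrow> 'a word" where
  "inv_word w = rev (map (\<lambda>(a, b). (a, \<not> b)) w)"

definition free_group :: "'a set \<Rightarrow> 'a word monoid" where
  "free_group gens = \<lparr> carrier = {w. fred w = w \<and> fst ` set w \<subseteq> gens},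
                    monoid.mult = (\<lambda>u v. fred (u @ v)), one = [] \<rparr>"

definition relator_closure :: "'a set \<Rightarrow> 'a word set \<Rightarrow> 'a word set" where
  "relator_closure gens rels = generate (free_group gens)
     {fred (g @ r @ inv_word g) | g r. g \<in> carrier (free_group gens) \<and> r \<in> rels}"

definition presented_group :: "'a set \<Rightarrow> 'a word set \<Rightarrow> 'a word set monoid" where
  "presented_group gens rels = free_group gens Mod relator_closure gens rels"

definition large :: "('g, 'b) monoid_scheme \<Rightarrow> bool" where
  "large G \<longleftrightarrow> (\<exists>H. subgroup H G \<and> finite (rcosets\<^bsub>G\<^esub> H) \<and>
     (\<exists>S :: nat set. (\<exists>a b. a \<in> S \<and> b \<in> S \<and> a \<noteq> b) \<and>
        (\<exists>f. f \<in> hom (G\<lparr>carrier := H\<rparr>) (free_group S) \<and> f ` H = carrier (free_group S))))"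

text \<open>A LOT: finite vertex set V and a set E of oriented labeled edges (x, w, y),
  meaning x --w--> y, with w a word in V^{+-1}.\<close>

definition is_LOT :: "'a set \<Rightarrow> ('a \<times> 'a word \<times> 'a) set \<Rightarrow> bool" where
  "is_LOT V E \<longleftrightarrow> finite V \<and> V \<noteq> {} \<and> finite E \<and>
     (\<forall>(x, w, y) \<in> E. x \<in> V \<and> y \<in> V \<and> x \<noteq> y \<and> fst ` set w \<subseteq> V) \<and>
     card E = card V - 1 \<and>
     (\<forall>u \<in> V. \<forall>v \<in> V. (u, v) \<in> ({(x, y). \<exists>w. (x, w, y) \<in> E \<or> (y, w, x) \<in> E})\<^sup>*)"

definition LOT_relator :: "'a \<times> 'a word \<times> 'a \<Rightarrow> 'a word" where
  "LOT_relator e = (case e of (x, w, y) \<Rightarrow> [(x, False)] @ w @ inv_word (w @ [(y, False)]))"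

definition LOT_group :: "'a set \<Rightarrow> ('a \<times> 'a word \<times> 'a) set \<Rightarrow> 'a word set monoid" where
  "LOT_group V E = presented_group V (LOT_relator ` E)"

text \<open>Every maximal block of consecutive occurrences of the letter z in w has even length
  (i.e. z occurs only with even exponents).\<close>
definition even_exponents :: "'a \<Rightarrow> 'a word \<Rightarrow> bool" where
  "even_exponents z w \<longleftrightarrow> (\<forall>u b v. w = u @ b @ v \<and> b \<noteq> [] \<and> (\<forall>c \<in> set b. fst c = z) \<and>
       (u = [] \<or> fst (last u) \<noteq> z) \<and> (v = [] \<or> fst (hd v) \<noteq> z) \<longrightarrow> even (length b))"

definition coxeter_type :: "('a \<times> 'a word \<times> 'a) set \<Rightarrow> bool" where
  "coxeter_type E \<longleftrightarrow> (\<forall>(x, w, y) \<in> E. \<forall>z. z \<noteq> x \<and> z \<noteq> y \<longrightarrow> even_exponents z w)"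

text \<open>Reduction in the free product of copies of Z/2 (x^2 = 1): letters only, cancel equal neighbours.\<close>
fun z2red :: "'a list \<Rightarrow> 'a list" where
  "z2red [] = []"
| "z2red (a # as) = (case z2red as of [] \<Rightarrow> [a] | b # bs \<Rightarrow> (if a = b then bs else a # b # bs))"

fun cycred :: "'a list \<Rightarrow> 'a list" where
  "cycred xs = (if 2 \<le> length xs \<and> hd xs = last xs then cycred (butlast (tl xs)) else xs)"

text \<open>m is the Coxeter label of the edge (x, w, y): r_e reduces, up to cyclic permutation,
  in \<langle>V | v^2\<rangle> to (yx)^m.\<close>
definition coxeter_label :: "'a \<times> 'a word \<times> 'a \<Rightarrow> nat \<Rightarrow> bool" where
  "coxeter_label e m = (case e of (x, w, y) \<Rightarrow>
     (\<exists>k. rotate k (cycred (z2red (map fst (LOT_relator e)))) = concat (replicate m [y, x])))"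

end

theory Submission
  imports Defs
begin

(*
  Send every vertex of the tree to an involution. Squares then cancel, so the relator of an
  edge from x to y becomes a conjugate of (y x)^m, m its Coxeter label. Choose two leaves a and
  c; as there are at least three vertices, their edges e1 and e2 are distinct. Sending a to A,
  c to C and all other vertices to B kills every relator as soon as A, B, C are involutions with
  (A B)^p = (C B)^q = 1, where p and q are the labels of e1 and e2: inner edges only give
  powers of B B = 1.

  Such involutions exist in the permutational wreath product F2 wr Sym(Z/p x Z/q), F2 free on
  {0, 1}: B is the point reflection z -> -z, and A and C are the point reflections in (1, 0) and
  (0, 1) conjugated by B-invariant elements of the base group, so that A B and C B are conjugate
  to translations of orders p and q. The stabiliser of (0, 0) in G(Gamma) has finite index, and
  the F2-coordinate at (0, 0) is a homomorphism on it. Two words in a, b, c whose images fix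
  (0, 0) pick up the letters 0 and 1, so this homomorphism is onto F2.
*)

fun reduced_word :: "'a word \<Rightarrow> bool" where
  "reduced_word [] = True"
| "reduced_word [a] = True"
| "reduced_word (a # b # t) = (\<not> cancels a b \<and> reduced_word (b # t))"

definition red_cons :: "'a \<times> bool \<Rightarrow> 'a word \<Rightarrow> 'a word" where
  "red_cons a l = (case l of [] \<Rightarrow> [a] | b # bs \<Rightarrow> (if cancels a b then bs else a # b # bs))"

lemma fred_Cons: "fred (a # w) = red_cons a (fred w)"
  by (simp add: red_cons_def)

declare fred.simps(2)[simp del]

lemma fred_singleton [simp]: "fred [a] = [a]"
  by (simp add: fred_Cons red_cons_def)

lemma reduced_word_tl: "reduced_word (a # w) \<Longrightarrow> reduced_word w"
  by (cases w) auto

lemma reduced_word_red_cons: "reduced_word l \<Longrightarrow> reduced_word (red_cons a l)"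
  by (cases l rule: reduced_word.cases) (auto simp: red_cons_def)

lemma reduced_word_fred: "reduced_word (fred w)"
  by (induct w) (auto simp: fred_Cons reduced_word_red_cons)

lemma fred_reduced_word: "reduced_word w \<Longrightarrow> fred w = w"
proof (induct w)
  case (Cons a w)
  then have "fred w = w" using reduced_word_tl by blast
  then show ?case using Cons.prems by (cases w) (auto simp: fred_Cons red_cons_def)
qed simp

lemma fred_idem [simp]: "fred (fred w) = fred w"
  by (rule fred_reduced_word[OF reduced_word_fred])

lemma fred_eq_self_iff: "fred w = w \<longleftrightarrow> reduced_word w"
  by (metis reduced_word_fred fred_reduced_word)

lemma cancels_cancels_eq: "cancels a b \<Longrightarrow> cancels b c \<Longrightarrow> a = c"
  by (cases a; cases b; cases c) (auto simp: cancels_def)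

lemma red_cons_red_cons_cancel:
  assumes "reduced_word l" and "cancels a b"
  shows "red_cons a (red_cons b l) = l"
  using assms
  by (cases l rule: reduced_word.cases) (auto simp: red_cons_def dest: cancels_cancels_eq)

lemma fred_append_fred_right: "fred (u @ fred v) = fred (u @ v)"
  by (induct u) (auto simp: fred_Cons)

lemma fred_red_cons_append:
  assumes "reduced_word r"
  shows "fred (red_cons a r @ v) = red_cons a (fred (r @ v))"
proof (cases r)
  case (Cons b bs)
  show ?thesis
  proof (cases "cancels a b")
    case True
    have "red_cons a (fred (r @ v)) = red_cons a (red_cons b (fred (bs @ v)))"
      using Cons by (simp add: fred_Cons)
    also have "\<dots> = fred (bs @ v)" by (rule red_cons_red_cons_cancel[OF reduced_word_fred True])
    finally show ?thesis using Cons True by (simp add: red_cons_def)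
  qed (use Cons in \<open>simp add: red_cons_def fred_Cons\<close>)
qed (simp add: red_cons_def fred_Cons)

lemma fred_append_fred_left: "fred (fred u @ v) = fred (u @ v)"
proof (induct u)
  case (Cons a u)
  have "fred (fred (a # u) @ v) = red_cons a (fred (fred u @ v))"
    by (simp add: fred_Cons fred_red_cons_append[OF reduced_word_fred])
  then show ?case using Cons by (simp add: fred_Cons)
qed simp

lemma fred_append_fred_middle: "fred (u @ fred v @ w) = fred (u @ v @ w)"
  by (metis fred_append_fred_left fred_append_fred_right)

lemma set_red_cons: "set (red_cons a l) \<subseteq> insert a (set l)"
  by (auto simp: red_cons_def split: list.splits)

lemma set_fred: "set (fred w) \<subseteq> set w"
  by (induct w) (use set_red_cons in \<open>fastforce simp: fred_Cons\<close>)+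

lemma inv_word_Nil [simp]: "inv_word [] = []"
  by (simp add: inv_word_def)

lemma inv_word_Cons: "inv_word (a # w) = inv_word w @ [(fst a, \<not> snd a)]"
  by (cases a) (simp add: inv_word_def)

lemma inv_word_append: "inv_word (u @ v) = inv_word v @ inv_word u"
  by (simp add: inv_word_def)

lemma inv_word_inv_word [simp]: "inv_word (inv_word w) = w"
  by (induct w) (auto simp: inv_word_def)

lemma fst_set_inv_word [simp]: "fst ` set (inv_word w) = fst ` set w"
  by (force simp: inv_word_def)

lemma fred_inv_word_append: "fred (inv_word w @ w) = []"
proof (induct w)
  case (Cons a w)
  have "cancels (fst a, \<not> snd a) a" by (simp add: cancels_def)
  then have "fred ((fst a, \<not> snd a) # a # w) = fred w"
    using red_cons_red_cons_cancel[OF reduced_word_fred] by (simp add: fred_Cons)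
  then show ?case
    using Cons by (metis append.assoc append_Cons append_Nil fred_append_fred_right inv_word_Cons)
qed simp

lemma free_group_carrier: "w \<in> carrier (free_group S) \<longleftrightarrow> fred w = w \<and> fst ` set w \<subseteq> S"
  by (simp add: free_group_def)

lemma free_group_mult: "x \<otimes>\<^bsub>free_group S\<^esub> y = fred (x @ y)"
  by (simp add: free_group_def)

lemma free_group_one: "\<one>\<^bsub>free_group S\<^esub> = []"
  by (simp add: free_group_def)

lemma fred_in_free_group: "fst ` set w \<subseteq> S \<Longrightarrow> fred w \<in> carrier (free_group S)"
  using set_fred[of w] by (auto simp: free_group_carrier)

lemma group_free_group: "group (free_group S)"
proof (rule groupI)
  fix x assume x: "x \<in> carrier (free_group S)"
  show "\<exists>y\<in>carrier (free_group S). y \<otimes>\<^bsub>free_group S\<^esub> x = \<one>\<^bsub>free_group S\<^esub>"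
  proof
    show "fred (inv_word x) \<in> carrier (free_group S)"
      using x by (intro fred_in_free_group) (auto simp: free_group_carrier)
  qed (simp add: free_group_mult free_group_one fred_append_fred_left fred_inv_word_append)
next
  fix x y assume "x \<in> carrier (free_group S)" "y \<in> carrier (free_group S)"
  then show "x \<otimes>\<^bsub>free_group S\<^esub> y \<in> carrier (free_group S)"
    unfolding free_group_mult by (intro fred_in_free_group) (auto simp: free_group_carrier)
qed (auto simp: free_group_mult free_group_one free_group_carrier fred_append_fred_left
    fred_append_fred_right)

lemma free_group_inv:
  assumes "x \<in> carrier (free_group S)"
  shows "inv\<^bsub>free_group S\<^esub> x = fred (inv_word x)"
proof -
  interpret group "free_group S" by (rule group_free_group)
  have "fred (inv_word x) \<in> carrier (free_group S)"
    using assms by (intro fred_in_free_group) (auto simp: free_group_carrier)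
  then show ?thesis
    by (intro inv_equality[OF _ assms])
      (simp_all add: free_group_mult free_group_one fred_append_fred_left fred_inv_word_append)
qed

lemma fred_inv_word_fred: "fred (inv_word (fred x)) = fred (inv_word x)"
proof -
  let ?F = "free_group (fst ` set x)"
  interpret group ?F by (rule group_free_group)
  have fx: "fred x \<in> carrier ?F" by (rule fred_in_free_group) simp
  have "fred (inv_word x) \<in> carrier ?F" by (rule fred_in_free_group) simp
  then have "fred (inv_word x) = inv\<^bsub>?F\<^esub> (fred x)"
    by (intro inv_equality[OF _ fx, symmetric])
      (simp add: free_group_mult free_group_one fred_append_fred_left fred_append_fred_right
        fred_inv_word_append)
  then show ?thesis using free_group_inv[OF fx] by simp
qed

lemma free_group_generated_by_letters:
  assumes T: "subgroup T (free_group S)" and letters: "\<And>s. s \<in> S \<Longrightarrow> [(s, False)] \<in> T"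
  shows "carrier (free_group S) \<subseteq> T"
proof
  interpret group "free_group S" by (rule group_free_group)
  fix w assume "w \<in> carrier (free_group S)"
  then have "reduced_word w" "fst ` set w \<subseteq> S" by (auto simp: free_group_carrier fred_eq_self_iff)
  then show "w \<in> T"
  proof (induct w)
    case Nil then show ?case using subgroup.one_closed[OF T] by (simp add: free_group_one)
  next
    case (Cons a w)
    obtain s b where a: "a = (s, b)" and s: "s \<in> S" using Cons.prems by (cases a) auto
    have "[(s, True)] = inv\<^bsub>free_group S\<^esub> [(s, False)]"
      using s by (simp add: free_group_inv free_group_carrier inv_word_def)
    then have "[a] \<in> T" using letters[OF s] subgroup.m_inv_closed[OF T] a by (cases b) auto
    moreover have "w \<in> T" using Cons reduced_word_tl[OF Cons.prems(1)] by auto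
    moreover have "[a] \<otimes>\<^bsub>free_group S\<^esub> w = a # w"
      using fred_reduced_word[OF Cons.prems(1)] by (simp add: free_group_mult)
    ultimately show ?case using subgroup.m_closed[OF T] by metis
  qed
qed

fun eval_word :: "('g, 'b) monoid_scheme \<Rightarrow> ('a \<Rightarrow> 'g) \<Rightarrow> 'a word \<Rightarrow> 'g" where
  "eval_word K s [] = \<one>\<^bsub>K\<^esub>"
| "eval_word K s (a # w) = (if snd a then inv\<^bsub>K\<^esub> (s (fst a)) else s (fst a)) \<otimes>\<^bsub>K\<^esub> eval_word K s w"

context group
begin

lemma eval_word_closed: "(\<And>v. s v \<in> carrier G) \<Longrightarrow> eval_word G s w \<in> carrier G"
  by (induct w) auto

lemma eval_word_append:
  "(\<And>v. s v \<in> carrier G) \<Longrightarrow> eval_word G s (u @ w) = eval_word G s u \<otimes> eval_word G s w"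
  by (induct u) (auto simp: eval_word_closed m_assoc)

lemma eval_word_red_cons:
  assumes s: "\<And>v. s v \<in> carrier G"
  shows "eval_word G s (red_cons a l) = eval_word G s (a # l)"
proof (cases l)
  case (Cons c cs)
  show ?thesis
  proof (cases "cancels a c")
    case True
    then obtain v b where "a = (v, b)" and "c = (v, \<not> b)"
      by (cases a; cases c) (auto simp: cancels_def)
    then show ?thesis
      using Cons True s by (cases b) (auto simp: red_cons_def m_assoc[symmetric] eval_word_closed)
  qed (simp add: Cons red_cons_def)
qed (simp add: red_cons_def)

lemma eval_word_fred: "(\<And>v. s v \<in> carrier G) \<Longrightarrow> eval_word G s (fred w) = eval_word G s w"
  by (induct w) (auto simp: fred_Cons eval_word_red_cons)

lemma eval_word_inv_word:
  assumes s: "\<And>v. s v \<in> carrier G"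
  shows "eval_word G s (inv_word w) = inv (eval_word G s w)"
  using s by (induct w) (auto simp: inv_word_Cons eval_word_append eval_word_closed inv_mult_group)

end

section \<open>Presented groups\<close>

definition relator_conjugates :: "'a set \<Rightarrow> 'a word set \<Rightarrow> 'a word set" where
  "relator_conjugates gens rels =
     {fred (g @ r @ inv_word g) | g r. g \<in> carrier (free_group gens) \<and> r \<in> rels}"

lemma relator_closure_eq_generate:
  "relator_closure gens rels = generate (free_group gens) (relator_conjugates gens rels)"
  by (simp add: relator_closure_def relator_conjugates_def)

lemma relator_conjugates_subset:
  assumes "\<And>r. r \<in> rels \<Longrightarrow> fst ` set r \<subseteq> gens"
  shows "relator_conjugates gens rels \<subseteq> carrier (free_group gens)"
proof -
  have "fred (g @ r @ inv_word g) \<in> carrier (free_group gens)"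
    if "g \<in> carrier (free_group gens)" and "r \<in> rels" for g r
    using that assms[OF that(2)]
    by (intro fred_in_free_group) (simp add: free_group_carrier image_Un)
  then show ?thesis by (auto simp: relator_conjugates_def)
qed

lemma relator_closure_normal:
  assumes rels: "\<And>r. r \<in> rels \<Longrightarrow> fst ` set r \<subseteq> gens"
  shows "relator_closure gens rels \<lhd> free_group gens"
  unfolding relator_closure_eq_generate
proof (rule group.normal_generateI[OF group_free_group relator_conjugates_subset[OF rels]])
  let ?F = "free_group gens"
  fix h g assume "h \<in> relator_conjugates gens rels" and g: "g \<in> carrier ?F"
  then obtain g' r where h: "h = fred (g' @ r @ inv_word g')" and g': "g' \<in> carrier ?F"
    and r: "r \<in> rels" by (auto simp: relator_conjugates_def)
  have gg': "fred (g @ g') \<in> carrier ?F"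
    by (intro fred_in_free_group) (use g g' in \<open>auto simp: free_group_carrier\<close>)
  have "g \<otimes>\<^bsub>?F\<^esub> h \<otimes>\<^bsub>?F\<^esub> inv\<^bsub>?F\<^esub> g = fred (g @ g' @ r @ inv_word g' @ inv_word g)"
    using g by (simp add: h free_group_mult free_group_inv fred_append_fred_left
      fred_append_fred_right
        fred_append_fred_middle)
  also have "\<dots> = fred ((g @ g' @ r) @ fred (inv_word (g @ g')))"
    using fred_append_fred_right[of "g @ g' @ r" "inv_word (g @ g')"] by (simp add: inv_word_append)
  also have "\<dots> = fred ((g @ g' @ r) @ fred (inv_word (fred (g @ g'))))"
    by (simp only: fred_inv_word_fred)
  also have "\<dots> = fred (fred (g @ g') @ r @ inv_word (fred (g @ g')))"
    using fred_append_fred_right[of "g @ g' @ r" "inv_word (fred (g @ g'))"]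
    by (simp add: fred_append_fred_left)
  finally show "g \<otimes>\<^bsub>?F\<^esub> h \<otimes>\<^bsub>?F\<^esub> inv\<^bsub>?F\<^esub> g \<in> relator_conjugates gens rels"
    unfolding relator_conjugates_def using gg' r by blast
qed

lemma group_presented_group:
  "(\<And>r. r \<in> rels \<Longrightarrow> fst ` set r \<subseteq> gens) \<Longrightarrow> group (presented_group gens rels)"
  unfolding presented_group_def by (rule normal.factorgroup_is_group[OF relator_closure_normal])

lemma eval_word_relator_closure:
  assumes K: "group K" and s: "\<And>v. s v \<in> carrier K"
    and rels: "\<forall>r \<in> rels. fst ` set r \<subseteq> gens \<and> eval_word K s r = \<one>\<^bsub>K\<^esub>"
    and n: "n \<in> relator_closure gens rels"
  shows "eval_word K s n = \<one>\<^bsub>K\<^esub>"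
proof -
  interpret K: group K by (rule K)
  have letters: "\<And>r. r \<in> rels \<Longrightarrow> fst ` set r \<subseteq> gens"
    using rels by blast
  have conj: "eval_word K s h = \<one>\<^bsub>K\<^esub>" if hc: "h \<in> relator_conjugates gens rels" for h
  proof -
    obtain g r where h: "h = fred (g @ r @ inv_word g)" and r: "r \<in> rels"
      using hc unfolding relator_conjugates_def by blast
    have "eval_word K s r = \<one>\<^bsub>K\<^esub>" using rels r by blast
    then show ?thesis
      using s by (simp add: h K.eval_word_fred K.eval_word_append K.eval_word_inv_word
          K.eval_word_closed)
  qed
  show ?thesis
    using n unfolding relator_closure_eq_generate
  proof (induct rule: generate.induct)
    case (inv h)
    then have "h \<in> carrier (free_group gens)"
      using relator_conjugates_subset[OF letters] by blast
    then show ?case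
      using conj[OF inv] s by (simp add: free_group_inv K.eval_word_fred K.eval_word_inv_word)
  next
    case (eng h1 h2)
    then show ?case using s by (simp add: free_group_mult K.eval_word_fred K.eval_word_append)
  qed (simp_all add: free_group_one conj)
qed

text \<open>The image of a coset is a singleton once every relator evaluates to \<open>\<one>\<close>
  (\<open>presented_lift_coset\<close>); otherwise \<open>the_elem\<close> yields junk.\<close>
definition presented_lift :: "('g, 'b) monoid_scheme \<Rightarrow> ('a \<Rightarrow> 'g) \<Rightarrow> 'a word set \<Rightarrow> 'g" where
  "presented_lift K s C = the_elem (eval_word K s ` C)"

lemma presented_group_carrier:
  "carrier (presented_group gens rels) =
     (\<lambda>w. relator_closure gens rels #>\<^bsub>free_group gens\<^esub> w) ` carrier (free_group gens)"
  by (auto simp: presented_group_def FactGroup_def RCOSETS_def)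

lemma presented_lift_coset:
  assumes K: "group K" and s: "\<And>v. s v \<in> carrier K"
    and rels: "\<forall>r \<in> rels. fst ` set r \<subseteq> gens \<and> eval_word K s r = \<one>\<^bsub>K\<^esub>"
    and w: "w \<in> carrier (free_group gens)"
  shows "presented_lift K s (relator_closure gens rels #>\<^bsub>free_group gens\<^esub> w) = eval_word K s w"
proof -
  interpret K: group K by (rule K)
  let ?N = "relator_closure gens rels"
  have "?N \<lhd> free_group gens"
    by (rule relator_closure_normal) (use rels in blast)
  then have "[] \<in> ?N"
    using normal.axioms(1) subgroup.one_closed by (metis free_group_one)
  have "eval_word K s ` (?N #>\<^bsub>free_group gens\<^esub> w) = (\<lambda>n. eval_word K s (fred (n @ w))) ` ?N"
    by (auto simp: r_coset_def free_group_mult)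
  also have "\<dots> = (\<lambda>n. eval_word K s w) ` ?N"
  proof (rule image_cong[OF refl])
    fix n assume "n \<in> ?N"
    then show "eval_word K s (fred (n @ w)) = eval_word K s w"
      using eval_word_relator_closure[OF K s rels \<open>n \<in> ?N\<close>] s
      by (simp add: K.eval_word_fred K.eval_word_append K.eval_word_closed)
  qed
  also have "\<dots> = {eval_word K s w}"
    using \<open>[] \<in> ?N\<close> by blast
  finally show ?thesis by (simp add: presented_lift_def)
qed

lemma presented_lift_hom:
  assumes K: "group K" and s: "\<And>v. s v \<in> carrier K"
    and rels: "\<forall>r \<in> rels. fst ` set r \<subseteq> gens \<and> eval_word K s r = \<one>\<^bsub>K\<^esub>"
  shows "presented_lift K s \<in> hom (presented_group gens rels) K"
proof -
  interpret K: group K by (rule K)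
  interpret N: normal "relator_closure gens rels" "free_group gens"
    by (rule relator_closure_normal) (use rels in blast)
  let ?N = "relator_closure gens rels" and ?P = "presented_group gens rels"
  note lift = presented_lift_coset[OF K s rels]
  show ?thesis
  proof (rule homI)
    fix A assume "A \<in> carrier ?P"
    then obtain x where "x \<in> carrier (free_group gens)" and "A = ?N #>\<^bsub>free_group gens\<^esub> x"
      by (auto simp: presented_group_carrier)
    then show "presented_lift K s A \<in> carrier K"
      using s by (simp add: lift K.eval_word_closed)
  next
    fix A B assume "A \<in> carrier ?P" "B \<in> carrier ?P"
    then obtain x y where x: "x \<in> carrier (free_group gens)" "A = ?N #>\<^bsub>free_group gens\<^esub> x"
      and y: "y \<in> carrier (free_group gens)" "B = ?N #>\<^bsub>free_group gens\<^esub> y"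
      by (auto simp: presented_group_carrier)
    then have "A \<otimes>\<^bsub>presented_group gens rels\<^esub> B = ?N #>\<^bsub>free_group gens\<^esub> (x \<otimes>\<^bsub>free_group gens\<^esub> y)"
      by (simp add: presented_group_def FactGroup_def N.rcos_sum)
    then have "presented_lift K s (A \<otimes>\<^bsub>presented_group gens rels\<^esub> B)
        = eval_word K s (x \<otimes>\<^bsub>free_group gens\<^esub> y)"
      using lift[OF N.m_closed[OF x(1) y(1)]] by simp
    also have "\<dots> = eval_word K s x \<otimes>\<^bsub>K\<^esub> eval_word K s y"
      using s by (simp add: free_group_mult K.eval_word_fred K.eval_word_append)
    finally show "presented_lift K s (A \<otimes>\<^bsub>presented_group gens rels\<^esub> B)
        = presented_lift K s A \<otimes>\<^bsub>K\<^esub> presented_lift K s B"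
      using x y by (simp add: lift)
  qed
qed

declare cycred.simps[simp del]

fun eval_letters :: "('g, 'b) monoid_scheme \<Rightarrow> ('a \<Rightarrow> 'g) \<Rightarrow> 'a list \<Rightarrow> 'g" where
  "eval_letters K s [] = \<one>\<^bsub>K\<^esub>"
| "eval_letters K s (v # l) = s v \<otimes>\<^bsub>K\<^esub> eval_letters K s l"

context group
begin

lemma eval_letters_closed: "(\<And>v. s v \<in> carrier G) \<Longrightarrow> eval_letters G s l \<in> carrier G"
  by (induct l) auto

lemma eval_letters_append:
  "(\<And>v. s v \<in> carrier G) \<Longrightarrow> eval_letters G s (u @ l) = eval_letters G s u \<otimes> eval_letters G s l"
  by (induct u) (auto simp: eval_letters_closed m_assoc)

lemma involutions_pair_pow:
  assumes a: "a \<in> carrier G" and b: "b \<in> carrier G"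
    and "a \<otimes> a = \<one>" and "b \<otimes> b = \<one>" and "(a \<otimes> b) [^] (n::nat) = \<one>"
    and "u \<in> {a, b}" and "v \<in> {a, b}"
  shows "(u \<otimes> v) [^] n = \<one>"
proof -
  have "inv a = a" and "inv b = b" using assms by (auto intro: inv_equality)
  then have "b \<otimes> a = inv (a \<otimes> b)" using a b by (simp add: inv_mult_group)
  then have "(b \<otimes> a) [^] n = \<one>" using assms by (simp add: nat_pow_inv)
  then show ?thesis using assms by auto
qed

lemma eval_letters_replicate_pair:
  assumes "\<And>v. s v \<in> carrier G"
  shows "eval_letters G s (concat (replicate m [y, x])) = (s y \<otimes> s x) [^] m"
proof (induct m)
  case (Suc m)
  have "eval_letters G s (concat (replicate (Suc m) [y, x])) = (s y \<otimes> s x) \<otimes> (s y \<otimes> s x) [^] m"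
    using Suc assms by (simp add: m_assoc eval_letters_closed)
  also have "\<dots> = (s y \<otimes> s x) [^] Suc m"
    using assms by (metis nat_pow_Suc2 m_closed)
  finally show ?case .
qed simp

context
  fixes s :: "'c \<Rightarrow> 'a"
  assumes s: "\<And>v. s v \<in> carrier G" and involution: "\<And>v. s v \<otimes> s v = \<one>"
begin

lemma eval_word_involutions: "eval_word G s w = eval_letters G s (map fst w)"
proof (induct w)
  case (Cons a w)
  have "inv (s (fst a)) = s (fst a)" using involution s by (intro inv_equality) auto
  then show ?case using Cons by simp
qed simp

lemma eval_letters_z2red: "eval_letters G s (z2red l) = eval_letters G s l"
proof (induct l)
  case (Cons a l)
  show ?case
  proof (cases "z2red l")
    case (Cons b bs)
    show ?thesis
    proof (cases "a = b")
      case True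
      have "eval_letters G s (a # l) = (s a \<otimes> s a) \<otimes> eval_letters G s bs"
        using Cons \<open>eval_letters G s (z2red l) = eval_letters G s l\<close> True s
        by (simp add: m_assoc eval_letters_closed)
      then show ?thesis using Cons True involution s by (simp add: eval_letters_closed)
    qed (use Cons \<open>eval_letters G s (z2red l) = eval_letters G s l\<close> in simp)
  qed (use Cons in simp)
qed simp

lemma eval_letters_cycred_eq_one:
  "eval_letters G s (cycred l) = \<one> \<Longrightarrow> eval_letters G s l = \<one>"
proof (induct l rule: cycred.induct)
  case (1 l)
  show ?case
  proof (cases "2 \<le> length l \<and> hd l = last l")
    case True
    have "2 \<le> length l" using True by simp
    then have "l = hd l # butlast (tl l) @ [last l]"
      by (cases l) (auto simp: last_ConsR)
    then have "eval_letters G s l = eval_letters G s (hd l # butlast (tl l) @ [last l])"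
      by (rule arg_cong)
    also have "\<dots> = s (hd l) \<otimes> s (hd l)"
      using 1 True s by (simp add: cycred.simps[of l] eval_letters_append)
    finally show ?thesis using involution by simp
  next
    case False
    then have "cycred l = l" by (subst cycred.simps) auto
    then show ?thesis using 1 by simp
  qed
qed

lemma eval_letters_rotate_eq_one:
  assumes "eval_letters G s (rotate k l) = \<one>"
  shows "eval_letters G s l = \<one>"
proof -
  let ?n = "k mod length l"
  have "eval_letters G s (drop ?n l) \<otimes> eval_letters G s (take ?n l) = \<one>"
    using assms s by (simp add: rotate_drop_take eval_letters_append)
  then have "eval_letters G s (take ?n l) \<otimes> eval_letters G s (drop ?n l) = \<one>"
    by (rule inv_comm[OF _ eval_letters_closed[OF s] eval_letters_closed[OF s]])
  then show ?thesis
    using eval_letters_append[OF s, where u = "take ?n l" and l = "drop ?n l"] by simp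
qed

text \<open>For involutions, cancelling squares, cyclic reduction and rotation do not change whether a
  word evaluates to \<open>\<one>\<close>.\<close>
lemma eval_word_LOT_relator:
  assumes "coxeter_label (x, w, y) m" and "(s y \<otimes> s x) [^] m = \<one>"
  shows "eval_word G s (LOT_relator (x, w, y)) = \<one>"
proof -
  let ?l = "map fst (LOT_relator (x, w, y))"
  obtain k where "rotate k (cycred (z2red ?l)) = concat (replicate m [y, x])"
    using assms(1) by (auto simp: coxeter_label_def)
  then have "eval_letters G s (rotate k (cycred (z2red ?l))) = \<one>"
    using assms(2) s by (simp add: eval_letters_replicate_pair)
  then have "eval_letters G s (z2red ?l) = \<one>"
    by (rule eval_letters_cycred_eq_one[OF eval_letters_rotate_eq_one])
  then show ?thesis by (simp add: eval_letters_z2red eval_word_involutions)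
qed

end

end

section \<open>A permutational wreath product\<close>

context group
begin

lemma conj_mult:
  "a \<in> carrier G \<Longrightarrow> x \<in> carrier G \<Longrightarrow> y \<in> carrier G \<Longrightarrow>
    (a \<otimes> x \<otimes> inv a) \<otimes> (a \<otimes> y \<otimes> inv a) = a \<otimes> (x \<otimes> y) \<otimes> inv a"
  by (simp add: m_assoc[symmetric]) (simp add: m_assoc)

lemma conj_nat_pow:
  "a \<in> carrier G \<Longrightarrow> x \<in> carrier G \<Longrightarrow> (a \<otimes> x \<otimes> inv a) [^] (n::nat) = a \<otimes> x [^] n \<otimes> inv a"
  by (induct n) (simp_all add: conj_mult)

end

text \<open>\<open>H \<wr> Sym(\<Omega>)\<close>, with base maps defined on the whole type and permutations of the type that
  stabilise \<open>\<Omega>\<close>. Permutations act on the right: \<open>snd (k \<otimes> l) = snd l \<circ> snd k\<close>.\<close>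
definition wreath :: "('h, 'm) monoid_scheme \<Rightarrow> 'p set \<Rightarrow> (('p \<Rightarrow> 'h) \<times> ('p \<Rightarrow> 'p)) monoid" where
  "wreath H \<Omega> = \<lparr>carrier = {k. bij (snd k) \<and> snd k ` \<Omega> = \<Omega> \<and> (\<forall>x. fst k x \<in> carrier H)},
     monoid.mult = (\<lambda>k l. (\<lambda>x. fst k x \<otimes>\<^bsub>H\<^esub> fst l (snd k x), snd l \<circ> snd k)),
     one = (\<lambda>x. \<one>\<^bsub>H\<^esub>, id)\<rparr>"

lemma wreath_carrier:
  "k \<in> carrier (wreath H \<Omega>) \<longleftrightarrow> bij (snd k) \<and> snd k ` \<Omega> = \<Omega> \<and> (\<forall>x. fst k x \<in> carrier H)"
  by (simp add: wreath_def)

lemma wreath_mult: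
  "k \<otimes>\<^bsub>wreath H \<Omega>\<^esub> l = (\<lambda>x. fst k x \<otimes>\<^bsub>H\<^esub> fst l (snd k x), snd l \<circ> snd k)"
  by (simp add: wreath_def)

lemma wreath_one: "\<one>\<^bsub>wreath H \<Omega>\<^esub> = (\<lambda>x. \<one>\<^bsub>H\<^esub>, id)"
  by (simp add: wreath_def)

lemma group_wreath:
  assumes "group H"
  shows "group (wreath H \<Omega>)"
proof -
  interpret H: group H by (rule assms)
  show ?thesis
  proof (rule groupI)
    fix k l assume "k \<in> carrier (wreath H \<Omega>)" "l \<in> carrier (wreath H \<Omega>)"
    moreover have "(snd l \<circ> snd k) ` \<Omega> = snd l ` snd k ` \<Omega>" by (simp add: image_comp)
    ultimately show "k \<otimes>\<^bsub>wreath H \<Omega>\<^esub> l \<in> carrier (wreath H \<Omega>)"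
      by (auto simp: wreath_carrier wreath_mult intro: bij_comp)
  next
    fix k l m
    assume "k \<in> carrier (wreath H \<Omega>)" "l \<in> carrier (wreath H \<Omega>)" "m \<in> carrier (wreath H \<Omega>)"
    then show "k \<otimes>\<^bsub>wreath H \<Omega>\<^esub> l \<otimes>\<^bsub>wreath H \<Omega>\<^esub> m = k \<otimes>\<^bsub>wreath H \<Omega>\<^esub> (l \<otimes>\<^bsub>wreath H \<Omega>\<^esub> m)"
      by (simp add: wreath_carrier wreath_mult H.m_assoc comp_assoc)
  next
    fix k assume k: "k \<in> carrier (wreath H \<Omega>)"
    then have bij: "bij (snd k)" and im: "snd k ` \<Omega> = \<Omega>" and f: "\<And>x. fst k x \<in> carrier H"
      by (auto simp: wreath_carrier)
    let ?k' = "(\<lambda>x. inv\<^bsub>H\<^esub> fst k (Hilbert_Choice.inv (snd k) x), Hilbert_Choice.inv (snd k))"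
    show "\<exists>k' \<in> carrier (wreath H \<Omega>). k' \<otimes>\<^bsub>wreath H \<Omega>\<^esub> k = \<one>\<^bsub>wreath H \<Omega>\<^esub>"
    proof
      show "?k' \<in> carrier (wreath H \<Omega>)"
        using bij im f
        by (simp add: wreath_carrier bij_imp_bij_inv) (metis bij_is_inj image_inv_f_f)
      show "?k' \<otimes>\<^bsub>wreath H \<Omega>\<^esub> k = \<one>\<^bsub>wreath H \<Omega>\<^esub>"
        using bij f by (simp add: wreath_mult wreath_one bij_is_surj surj_f_inv_f
          surj_iff[symmetric])
    qed
  qed (auto simp: wreath_carrier wreath_mult wreath_one)
qed

definition wreath_perm :: "('h, 'm) monoid_scheme \<Rightarrow> ('p \<Rightarrow> 'p) \<Rightarrow> ('p \<Rightarrow> 'h) \<times> ('p \<Rightarrow> 'p)" where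
  "wreath_perm H f = (\<lambda>x. \<one>\<^bsub>H\<^esub>, f)"

definition wreath_base :: "('p \<Rightarrow> 'h) \<Rightarrow> ('p \<Rightarrow> 'h) \<times> ('p \<Rightarrow> 'p)" where
  "wreath_base g = (g, id)"

definition wreath_conj ::
    "('h, 'm) monoid_scheme \<Rightarrow> 'p set \<Rightarrow> ('p \<Rightarrow> 'h) \<Rightarrow> ('p \<Rightarrow> 'p) \<Rightarrow> ('p \<Rightarrow> 'h) \<times> ('p \<Rightarrow> 'p)" where
  "wreath_conj H \<Omega> g h =
     wreath_base g \<otimes>\<^bsub>wreath H \<Omega>\<^esub> wreath_perm H h \<otimes>\<^bsub>wreath H \<Omega>\<^esub> inv\<^bsub>wreath H \<Omega>\<^esub> wreath_base g"

context
  fixes H :: "('h, 'm) monoid_scheme" and \<Omega> :: "'p set"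
  assumes H: "group H"
begin

interpretation H: group H by (rule H)
interpretation W: group "wreath H \<Omega>" by (rule group_wreath[OF H])

lemma wreath_perm_in_carrier: "bij f \<Longrightarrow> f ` \<Omega> = \<Omega> \<Longrightarrow> wreath_perm H f \<in> carrier (wreath H \<Omega>)"
  by (simp add: wreath_perm_def wreath_carrier)

lemma wreath_perm_mult: "wreath_perm H f \<otimes>\<^bsub>wreath H \<Omega>\<^esub> wreath_perm H f' = wreath_perm H (f' \<circ> f)"
  by (simp add: wreath_perm_def wreath_mult)

lemma wreath_perm_id: "wreath_perm H id = \<one>\<^bsub>wreath H \<Omega>\<^esub>"
  by (simp add: wreath_perm_def wreath_one)

lemma wreath_perm_pow: "wreath_perm H f [^]\<^bsub>wreath H \<Omega>\<^esub> (n::nat) = wreath_perm H (f ^^ n)"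
  by (induct n) (simp_all add: wreath_perm_id[symmetric] wreath_perm_mult comp_def id_def)

lemma wreath_base_in_carrier: "(\<And>x. g x \<in> carrier H) \<Longrightarrow> wreath_base g \<in> carrier (wreath H \<Omega>)"
  by (simp add: wreath_base_def wreath_carrier)

lemma wreath_base_inv:
  assumes "\<And>x. g x \<in> carrier H"
  shows "inv\<^bsub>wreath H \<Omega>\<^esub> (wreath_base g) = wreath_base (\<lambda>x. inv\<^bsub>H\<^esub> g x)"
  using assms by (intro W.inv_equality)
    (simp_all add: wreath_base_def wreath_mult wreath_one wreath_carrier)

lemma wreath_base_perm_commute:
  "(\<And>x. g x \<in> carrier H) \<Longrightarrow> g \<circ> f = g \<Longrightarrow>
    wreath_base g \<otimes>\<^bsub>wreath H \<Omega>\<^esub> wreath_perm H f = wreath_perm H f \<otimes>\<^bsub>wreath H \<Omega>\<^esub> wreath_base g"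
  by (simp add: wreath_base_def wreath_perm_def wreath_mult) (metis comp_apply)

lemma wreath_conj_eq: 
  assumes "\<And>x. g x \<in> carrier H"
  shows "wreath_conj H \<Omega> g h = (\<lambda>x. g x \<otimes>\<^bsub>H\<^esub> inv\<^bsub>H\<^esub> g (h x), h)"
  unfolding wreath_conj_def wreath_base_inv[OF assms]
  using assms by (simp add: wreath_base_def wreath_perm_def wreath_mult)

lemma wreath_conj_in_carrier:
  "(\<And>x. g x \<in> carrier H) \<Longrightarrow> bij h \<Longrightarrow> h ` \<Omega> = \<Omega> \<Longrightarrow> wreath_conj H \<Omega> g h \<in> carrier (wreath H \<Omega>)"
  unfolding wreath_conj_def by (intro W.m_closed W.inv_closed wreath_base_in_carrier
    wreath_perm_in_carrier)

text \<open>As \<open>g\<close> is \<open>f\<close>-invariant, the product with \<open>wreath_perm H f\<close> is the conjugate of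
  \<open>wreath_perm H (f \<circ> h)\<close> by \<open>wreath_base g\<close>.\<close>
lemma wreath_conj_relations:
  assumes g: "\<And>x. g x \<in> carrier H" and h: "bij h" "h ` \<Omega> = \<Omega>" "h \<circ> h = id"
    and f: "bij f" "f ` \<Omega> = \<Omega>" "g \<circ> f = g" and order: "(f \<circ> h) ^^ n = id"
  shows "wreath_conj H \<Omega> g h \<otimes>\<^bsub>wreath H \<Omega>\<^esub> wreath_conj H \<Omega> g h = \<one>\<^bsub>wreath H \<Omega>\<^esub>"
    and "(wreath_conj H \<Omega> g h \<otimes>\<^bsub>wreath H \<Omega>\<^esub> wreath_perm H f) [^]\<^bsub>wreath H \<Omega>\<^esub> n = \<one>\<^bsub>wreath H \<Omega>\<^esub>"
proof -
  let ?g = "wreath_base g" and ?h = "wreath_perm H h" and ?f = "wreath_perm H f"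
  have G: "?g \<in> carrier (wreath H \<Omega>)" using g by (rule wreath_base_in_carrier)
  have Hc: "?h \<in> carrier (wreath H \<Omega>)" using h by (intro wreath_perm_in_carrier)
  have F: "?f \<in> carrier (wreath H \<Omega>)" using f by (intro wreath_perm_in_carrier)
  have "(f \<circ> h) ` \<Omega> = \<Omega>" using f(2) h(2) by (metis image_comp)
  then have FH: "wreath_perm H (f \<circ> h) \<in> carrier (wreath H \<Omega>)"
    using f h by (intro wreath_perm_in_carrier bij_comp)
  show "wreath_conj H \<Omega> g h \<otimes>\<^bsub>wreath H \<Omega>\<^esub> wreath_conj H \<Omega> g h = \<one>\<^bsub>wreath H \<Omega>\<^esub>"
    using G Hc by (simp add: wreath_conj_def W.conj_mult wreath_perm_mult h(3) wreath_perm_id)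
  have "(\<lambda>x. inv\<^bsub>H\<^esub> g x) \<circ> f = (\<lambda>x. inv\<^bsub>H\<^esub> g x)"
    using f(3) by (metis comp_apply comp_def)
  then have commute: "inv\<^bsub>wreath H \<Omega>\<^esub> ?g \<otimes>\<^bsub>wreath H \<Omega>\<^esub> ?f = ?f \<otimes>\<^bsub>wreath H \<Omega>\<^esub> inv\<^bsub>wreath H \<Omega>\<^esub> ?g"
    using g by (simp add: wreath_base_inv wreath_base_perm_commute)
  have "wreath_conj H \<Omega> g h \<otimes>\<^bsub>wreath H \<Omega>\<^esub> ?f
      = ?g \<otimes>\<^bsub>wreath H \<Omega>\<^esub> (?h \<otimes>\<^bsub>wreath H \<Omega>\<^esub> (inv\<^bsub>wreath H \<Omega>\<^esub> ?g \<otimes>\<^bsub>wreath H \<Omega>\<^esub> ?f))"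
    using G Hc F by (simp add: wreath_conj_def W.m_assoc)
  also have "\<dots> = ?g \<otimes>\<^bsub>wreath H \<Omega>\<^esub> (?h \<otimes>\<^bsub>wreath H \<Omega>\<^esub> ?f) \<otimes>\<^bsub>wreath H \<Omega>\<^esub> inv\<^bsub>wreath H \<Omega>\<^esub> ?g"
    using G Hc F by (simp add: commute W.m_assoc)
  finally show "(wreath_conj H \<Omega> g h \<otimes>\<^bsub>wreath H \<Omega>\<^esub> ?f) [^]\<^bsub>wreath H \<Omega>\<^esub> n = \<one>\<^bsub>wreath H \<Omega>\<^esub>"
    using G FH by (simp add: wreath_perm_mult W.conj_nat_pow wreath_perm_pow order wreath_perm_id)
qed

end

section \<open>Point reflections of a discrete torus\<close>

definition torus :: "int \<Rightarrow> int \<Rightarrow> (int \<times> int) set" where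
  "torus p q = {0..<p} \<times> {0..<q}"

text \<open>The point reflection \<open>z \<mapsto> (\<alpha>, \<beta>) - z\<close> of \<open>\<int>/p \<times> \<int>/q\<close>, extended by the identity.\<close>
definition torus_reflection :: "int \<Rightarrow> int \<Rightarrow> int \<Rightarrow> int \<Rightarrow> int \<times> int \<Rightarrow> int \<times> int" where
  "torus_reflection p q \<alpha> \<beta> z =
     (if z \<in> torus p q then ((\<alpha> - fst z) mod p, (\<beta> - snd z) mod q) else z)"

lemma finite_torus: "finite (torus p q)"
  by (simp add: torus_def)

context
  fixes p q :: int
  assumes p: "0 < p" and q: "0 < q"
begin

lemma torus_reflection_in_torus: "z \<in> torus p q \<Longrightarrow> torus_reflection p q \<alpha> \<beta> z \<in> torus p q"
  using p q by (simp add: torus_reflection_def torus_def)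

lemma torus_reflection_involution: "torus_reflection p q \<alpha> \<beta> (torus_reflection p q \<alpha> \<beta> z) = z"
  using p q torus_reflection_in_torus[of z \<alpha> \<beta>]
  by (cases z) (auto simp: torus_reflection_def torus_def mod_diff_right_eq)

lemma torus_reflection_comp_self: "torus_reflection p q \<alpha> \<beta> \<circ> torus_reflection p q \<alpha> \<beta> = id"
  by (auto simp: torus_reflection_involution)

lemma bij_torus_reflection: "bij (torus_reflection p q \<alpha> \<beta>)"
  by (rule o_bij[OF torus_reflection_comp_self torus_reflection_comp_self])

lemma torus_reflection_image: "torus_reflection p q \<alpha> \<beta> ` torus p q = torus p q"
  using torus_reflection_in_torus torus_reflection_involution
  by (metis image_subsetI subset_antisym image_eqI subsetI)

lemma torus_reflection_comp_funpow:
  assumes z: "z \<in> torus p q"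
  shows "((torus_reflection p q \<alpha>' \<beta>' \<circ> torus_reflection p q \<alpha> \<beta>) ^^ n) z =
    ((fst z + int n * (\<alpha>' - \<alpha>)) mod p, (snd z + int n * (\<beta>' - \<beta>)) mod q)"
proof (induct n)
  case 0
  then show ?case using z by (cases z) (simp add: torus_def)
next
  case (Suc n)
  let ?z = "((fst z + int n * (\<alpha>' - \<alpha>)) mod p, (snd z + int n * (\<beta>' - \<beta>)) mod q)"
  have z': "?z \<in> torus p q" using p q by (simp add: torus_def)
  then have "torus_reflection p q \<alpha> \<beta> ?z =
      ((\<alpha> - (fst z + int n * (\<alpha>' - \<alpha>))) mod p, (\<beta> - (snd z + int n * (\<beta>' - \<beta>))) mod q)"
    by (simp add: torus_reflection_def mod_diff_right_eq)
  moreover have "torus_reflection p q \<alpha> \<beta> ?z \<in> torus p q"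
    using z' by (rule torus_reflection_in_torus)
  ultimately have "torus_reflection p q \<alpha>' \<beta>' (torus_reflection p q \<alpha> \<beta> ?z) =
      ((\<alpha>' - (\<alpha> - (fst z + int n * (\<alpha>' - \<alpha>)))) mod p,
       (\<beta>' - (\<beta> - (snd z + int n * (\<beta>' - \<beta>)))) mod q)"
    by (simp add: torus_reflection_def mod_diff_right_eq)
  also have "\<dots> = ((fst z + int (Suc n) * (\<alpha>' - \<alpha>)) mod p, (snd z + int (Suc n) * (\<beta>' - \<beta>)) mod q)"
    by (simp add: algebra_simps)
  finally show ?case using Suc by simp
qed

lemma torus_reflection_comp_order:
  assumes "(int n * (\<alpha>' - \<alpha>)) mod p = 0" and "(int n * (\<beta>' - \<beta>)) mod q = 0"
  shows "(torus_reflection p q \<alpha>' \<beta>' \<circ> torus_reflection p q \<alpha> \<beta>) ^^ n = id"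
proof
  fix z
  show "((torus_reflection p q \<alpha>' \<beta>' \<circ> torus_reflection p q \<alpha> \<beta>) ^^ n) z = id z"
  proof (cases "z \<in> torus p q")
    case True
    then show ?thesis
      using assms by (cases z) (simp add: torus_reflection_comp_funpow torus_def
        mod_add_right_eq[symmetric])
  next
    case False
    then show ?thesis by (induct n) (simp_all add: torus_reflection_def)
  qed
qed

end

abbreviation F2 :: "nat word monoid" where
  "F2 \<equiv> free_group {0, 1}"

text \<open>The decorations sit at the fixed point \<open>(0, 0)\<close> and on the orbit \<open>{(1, 1), (-1, -1)}\<close> of
  \<open>z \<mapsto> -z\<close>, as \<open>wreath_conj_relations\<close> requires; this needs \<open>p, q \<ge> 3\<close>.\<close>
definition marker_a :: "int \<times> int \<Rightarrow> nat word" where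
  "marker_a z = (if z = (0, 0) then [(0, True)] else [])"

definition marker_c :: "int \<Rightarrow> int \<Rightarrow> int \<times> int \<Rightarrow> nat word" where
  "marker_c p q z = (if z = (1, 1) \<or> z = (p - 1, q - 1) then [(1, True)] else [])"

definition gen_a :: "int \<Rightarrow> int \<Rightarrow> (int \<times> int \<Rightarrow> nat word) \<times> (int \<times> int \<Rightarrow> int \<times> int)" where
  "gen_a p q = wreath_conj F2 (torus p q) marker_a (torus_reflection p q 1 0)"

definition gen_b :: "int \<Rightarrow> int \<Rightarrow> (int \<times> int \<Rightarrow> nat word) \<times> (int \<times> int \<Rightarrow> int \<times> int)" where
  "gen_b p q = wreath_perm F2 (torus_reflection p q 0 0)"

definition gen_c :: "int \<Rightarrow> int \<Rightarrow> (int \<times> int \<Rightarrow> nat word) \<times> (int \<times> int \<Rightarrow> int \<times> int)" where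
  "gen_c p q = wreath_conj F2 (torus p q) (marker_c p q) (torus_reflection p q 0 1)"

lemma marker_a_in_F2: "marker_a z \<in> carrier F2"
  by (simp add: marker_a_def free_group_carrier)

lemma marker_c_in_F2: "marker_c p q z \<in> carrier F2"
  by (simp add: marker_c_def free_group_carrier)

lemma wreath_conj_F2_eq:
  assumes "\<And>z. g z \<in> carrier F2"
  shows "wreath_conj F2 \<Omega> g h = (\<lambda>z. fred (g z @ inv_word (g (h z))), h)"
  using assms by (simp add: wreath_conj_eq group_free_group free_group_inv free_group_mult
      fred_append_fred_right)

context
  fixes p q :: int
  assumes p: "3 \<le> p" and q: "3 \<le> q"
begin

lemma torus_reflection_points:
  shows "torus_reflection p q 0 1 (0, 0) = (0, 1)"
    and "torus_reflection p q 1 0 (0, 1) = (1, q - 1)"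
    and "torus_reflection p q 0 0 (1, q - 1) = (p - 1, 1)"
    and "torus_reflection p q 0 1 (p - 1, 1) = (1, 0)"
    and "torus_reflection p q 1 0 (1, 0) = (0, 0)"
    and "torus_reflection p q 0 0 (1, 0) = (p - 1, 0)"
    and "torus_reflection p q 0 1 (p - 1, 0) = (1, 1)"
    and "torus_reflection p q 1 0 (1, 1) = (0, q - 1)"
    and "torus_reflection p q 0 0 (0, q - 1) = (0, 1)"
    and "torus_reflection p q 0 1 (0, 1) = (0, 0)"
    and "torus_reflection p q 0 0 (0, 0) = (0, 0)"
    and "torus_reflection p q 0 0 (1, 1) = (p - 1, q - 1)"
    and "torus_reflection p q 0 0 (p - 1, q - 1) = (1, 1)"
  using p q by (simp_all add: torus_reflection_def torus_def zmod_zminus1_eq_if)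

lemma torus_pos: "0 < p" "0 < q"
  using p q by auto

lemma marker_a_invariant: "marker_a \<circ> torus_reflection p q 0 0 = marker_a"
proof
  fix z
  have "torus_reflection p q 0 0 z = (0, 0) \<longleftrightarrow> z = (0, 0)"
    using torus_reflection_points(11) torus_reflection_involution[OF torus_pos] by metis
  then show "(marker_a \<circ> torus_reflection p q 0 0) z = marker_a z" by (simp add: marker_a_def)
qed

lemma marker_c_invariant: "marker_c p q \<circ> torus_reflection p q 0 0 = marker_c p q"
proof
  fix z
  have "torus_reflection p q 0 0 z = (1, 1) \<longleftrightarrow> z = (p - 1, q - 1)"
    and "torus_reflection p q 0 0 z = (p - 1, q - 1) \<longleftrightarrow> z = (1, 1)"
    using torus_reflection_points(12,13) torus_reflection_involution[OF torus_pos] by metis+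
  then show "(marker_c p q \<circ> torus_reflection p q 0 0) z = marker_c p q z"
    by (simp add: marker_c_def)
qed

lemma gen_a_in_carrier: "gen_a p q \<in> carrier (wreath F2 (torus p q))"
  unfolding gen_a_def using torus_pos
  by (intro wreath_conj_in_carrier group_free_group marker_a_in_F2 bij_torus_reflection
    torus_reflection_image)

lemma gen_b_in_carrier: "gen_b p q \<in> carrier (wreath F2 (torus p q))"
  unfolding gen_b_def using torus_pos
  by (intro wreath_perm_in_carrier group_free_group bij_torus_reflection torus_reflection_image)

lemma gen_c_in_carrier: "gen_c p q \<in> carrier (wreath F2 (torus p q))"
  unfolding gen_c_def using torus_pos
  by (intro wreath_conj_in_carrier group_free_group marker_c_in_F2 bij_torus_reflection
    torus_reflection_image)

lemma gen_b_involution: "gen_b p q \<otimes>\<^bsub>wreath F2 (torus p q)\<^esub> gen_b p q = \<one>\<^bsub>wreath F2 (torus p q)\<^esub>"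
  using torus_pos
  by (simp add: gen_b_def wreath_perm_mult group_free_group torus_reflection_comp_self
    wreath_perm_id)

lemma gen_a_relations:
  shows "gen_a p q \<otimes>\<^bsub>wreath F2 (torus p q)\<^esub> gen_a p q = \<one>\<^bsub>wreath F2 (torus p q)\<^esub>"
    and "(gen_a p q \<otimes>\<^bsub>wreath F2 (torus p q)\<^esub> gen_b p q) [^]\<^bsub>wreath F2 (torus p q)\<^esub> nat p
      = \<one>\<^bsub>wreath F2 (torus p q)\<^esub>"
proof -
  have "(torus_reflection p q 0 0 \<circ> torus_reflection p q 1 0) ^^ nat p = id"
    using torus_pos by (intro torus_reflection_comp_order) simp_all
  note relations = wreath_conj_relations[OF group_free_group marker_a_in_F2
      bij_torus_reflection[OF torus_pos] torus_reflection_image[OF torus_pos]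
      torus_reflection_comp_self[OF torus_pos] bij_torus_reflection[OF torus_pos]
      torus_reflection_image[OF torus_pos] marker_a_invariant this]
  show "gen_a p q \<otimes>\<^bsub>wreath F2 (torus p q)\<^esub> gen_a p q = \<one>\<^bsub>wreath F2 (torus p q)\<^esub>"
    and "(gen_a p q \<otimes>\<^bsub>wreath F2 (torus p q)\<^esub> gen_b p q) [^]\<^bsub>wreath F2 (torus p q)\<^esub> nat p
      = \<one>\<^bsub>wreath F2 (torus p q)\<^esub>"
    using relations by (simp_all add: gen_a_def gen_b_def)
qed

lemma gen_c_relations:
  shows "gen_c p q \<otimes>\<^bsub>wreath F2 (torus p q)\<^esub> gen_c p q = \<one>\<^bsub>wreath F2 (torus p q)\<^esub>"
    and "(gen_c p q \<otimes>\<^bsub>wreath F2 (torus p q)\<^esub> gen_b p q) [^]\<^bsub>wreath F2 (torus p q)\<^esub> nat q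
      = \<one>\<^bsub>wreath F2 (torus p q)\<^esub>"
proof -
  have "(torus_reflection p q 0 0 \<circ> torus_reflection p q 0 1) ^^ nat q = id"
    using torus_pos by (intro torus_reflection_comp_order) simp_all
  note relations = wreath_conj_relations[OF group_free_group marker_c_in_F2
      bij_torus_reflection[OF torus_pos] torus_reflection_image[OF torus_pos]
      torus_reflection_comp_self[OF torus_pos] bij_torus_reflection[OF torus_pos]
      torus_reflection_image[OF torus_pos] marker_c_invariant this]
  show "gen_c p q \<otimes>\<^bsub>wreath F2 (torus p q)\<^esub> gen_c p q = \<one>\<^bsub>wreath F2 (torus p q)\<^esub>"
    and "(gen_c p q \<otimes>\<^bsub>wreath F2 (torus p q)\<^esub> gen_b p q) [^]\<^bsub>wreath F2 (torus p q)\<^esub> nat q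
      = \<one>\<^bsub>wreath F2 (torus p q)\<^esub>"
    using relations by (simp_all add: gen_c_def gen_b_def)
qed

lemma gen_a_eq:
  "gen_a p q = (\<lambda>z. fred (marker_a z @ inv_word (marker_a (torus_reflection p q 1 0 z))),
    torus_reflection p q 1 0)"
  unfolding gen_a_def by (rule wreath_conj_F2_eq[OF marker_a_in_F2])

lemma gen_c_eq:
  "gen_c p q = (\<lambda>z. fred (marker_c p q z @ inv_word (marker_c p q (torus_reflection p q 0 1 z))),
    torus_reflection p q 0 1)"
  unfolding gen_c_def by (rule wreath_conj_F2_eq[OF marker_c_in_F2])

text \<open>Both words fix \<open>(0, 0)\<close>; along the first the letter \<open>0\<close> is picked up at the last step, along
  the second the letter \<open>1\<close> at the sixth step, on entering \<open>(1, 1)\<close>.\<close>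
lemma gen_loops:
  assumes "s a = gen_a p q" and "s b = gen_b p q" and "s c = gen_c p q"
  shows "snd (eval_word (wreath F2 (torus p q)) s
      [(c, False), (a, False), (b, False), (c, False), (a, False)]) (0, 0) = (0, 0)"
    and "fst (eval_word (wreath F2 (torus p q)) s
      [(c, False), (a, False), (b, False), (c, False), (a, False)]) (0, 0) = [(0, False)]"
    and "snd (eval_word (wreath F2 (torus p q)) s [(c, False), (a, False), (b, False), (c, False),
      (b, False), (c, False), (a, False), (b, False), (c, False)]) (0, 0) = (0, 0)"
    and "fst (eval_word (wreath F2 (torus p q)) s [(c, False), (a, False), (b, False), (c, False),
      (b, False), (c, False), (a, False), (b, False), (c, False)]) (0, 0) = [(1, False)]"
  using p q
  by (simp_all add: assms wreath_mult wreath_one gen_a_eq gen_c_eq gen_b_def wreath_perm_def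
      torus_reflection_points marker_a_def marker_c_def inv_word_def free_group_mult free_group_one)

end

section \<open>Leaves of labelled oriented trees\<close>

definition ends :: "'a \<times> 'b \<times> 'a \<Rightarrow> 'a set" where
  "ends e = {fst e, snd (snd e)}"

definition incident :: "('a \<times> 'b \<times> 'a) set \<Rightarrow> 'a \<Rightarrow> ('a \<times> 'b \<times> 'a) set" where
  "incident E v = {e \<in> E. v \<in> ends e}"

definition LOT_adjacent :: "('a \<times> 'b \<times> 'a) set \<Rightarrow> ('a \<times> 'a) set" where
  "LOT_adjacent E = {(x, y). \<exists>w. (x, w, y) \<in> E \<or> (y, w, x) \<in> E}"

lemma incident_eq_singleton_iff:
  "incident E v = {e} \<longleftrightarrow> e \<in> E \<and> v \<in> ends e \<and> (\<forall>e' \<in> E. v \<in> ends e' \<longrightarrow> e' = e)"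
  unfolding incident_def by blast

lemma LOT_edge:
  "is_LOT V E \<Longrightarrow> (x, w, y) \<in> E \<Longrightarrow> x \<in> V \<and> y \<in> V \<and> x \<noteq> y \<and> fst ` set w \<subseteq> V"
  unfolding is_LOT_def by fast

lemma LOT_ends:
  assumes "is_LOT V E" and "e \<in> E"
  shows "ends e \<subseteq> V" and "card (ends e) = 2"
proof -
  obtain x w y where "e = (x, w, y)" by (cases e)
  then show "ends e \<subseteq> V" and "card (ends e) = 2"
    using LOT_edge[OF assms(1)] assms(2) by (auto simp: ends_def)
qed

lemma LOT_adjacent_incident:
  assumes "(u, v) \<in> LOT_adjacent E"
  shows "\<exists>e \<in> E. u \<in> ends e \<and> v \<in> ends e"
  using assms by (force simp: LOT_adjacent_def ends_def)

lemma LOT_connected: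
  "is_LOT V E \<Longrightarrow> u \<in> V \<Longrightarrow> v \<in> V \<Longrightarrow> (u, v) \<in> (LOT_adjacent E)\<^sup>*"
  unfolding is_LOT_def LOT_adjacent_def by blast

lemma LOT_incident_nonempty:
  assumes LOT: "is_LOT V E" and "2 \<le> card V" and v: "v \<in> V"
  shows "incident E v \<noteq> {}"
proof -
  have "\<not> V \<subseteq> {v}"
  proof
    assume "V \<subseteq> {v}"
    then have "card V \<le> card {v}" by (intro card_mono) simp_all
    then show False using assms(2) by simp
  qed
  then obtain u where u: "u \<in> V" "u \<noteq> v" by auto
  have "(v, u) \<in> (LOT_adjacent E)\<^sup>*"
    using LOT_connected[OF LOT v u(1)] .
  then obtain z where "(v, z) \<in> LOT_adjacent E"
    using u(2) by (cases rule: converse_rtranclE) auto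
  then obtain e where "e \<in> E" and "v \<in> ends e"
    by (meson LOT_adjacent_incident)
  then have "e \<in> incident E v" by (simp add: incident_def)
  then show ?thesis by blast
qed

lemma LOT_degree_sum:
  assumes LOT: "is_LOT V E"
  shows "(\<Sum>v\<in>V. card (incident E v)) = 2 * card E"
proof -
  have finE: "finite E" using LOT by (simp add: is_LOT_def)
  have "(\<Sum>v\<in>V. card (incident E v)) = (\<Sum>v\<in>V. \<Sum>e\<in>E. of_bool (v \<in> ends e))"
    using finE by (simp add: incident_def Int_def)
  also have "\<dots> = (\<Sum>e\<in>E. \<Sum>v\<in>V. of_bool (v \<in> ends e))"
    by (rule sum.swap)
  also have "\<dots> = (\<Sum>e\<in>E. 2)"
  proof (rule sum.cong)
    fix e assume "e \<in> E"
    then have "V \<inter> {v. v \<in> ends e} = ends e" and "card (ends e) = 2"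
      using LOT_ends[OF LOT \<open>e \<in> E\<close>] by auto
    then show "(\<Sum>v\<in>V. of_bool (v \<in> ends e)) = (2::nat)"
      using LOT by (simp add: is_LOT_def)
  qed simp
  finally show ?thesis by simp
qed

text \<open>Handshake counting: a tree with \<open>n \<ge> 2\<close> vertices has degree sum \<open>2n - 2\<close> and no isolated
  vertex, so at least two vertices have degree one.\<close>
lemma LOT_two_leaves_exist:
  assumes LOT: "is_LOT V E" and V2: "2 \<le> card V"
  obtains a c where "a \<in> V" "c \<in> V" "a \<noteq> c" "card (incident E a) = 1" "card (incident E c) = 1"
proof -
  define L where "L = {v \<in> V. card (incident E v) \<le> 1}"
  have finV: "finite V" and cardE: "card E = card V - 1" and finE: "finite E"
    using LOT by (auto simp: is_LOT_def)
  have finL: "finite L" and LV: "L \<subseteq> V" using finV by (auto simp: L_def)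
  have deg_pos: "1 \<le> card (incident E v)" if "v \<in> V" for v
    using LOT_incident_nonempty[OF LOT V2 that] finE
    by (simp add: Suc_le_eq card_gt_0_iff incident_def)
  have "card L + 2 * (card V - card L) = (\<Sum>v\<in>V. if v \<in> L then 1 else 2)"
    using finV LV finL by (simp add: sum.If_cases Int_absorb1 card_Diff_subset Diff_eq[symmetric])
  also have "\<dots> \<le> (\<Sum>v\<in>V. card (incident E v))"
    using deg_pos by (intro sum_mono) (auto simp: L_def)
  also have "\<dots> = 2 * (card V - 1)"
    by (simp add: LOT_degree_sum[OF LOT] cardE)
  finally have "2 \<le> card L"
    using V2 card_mono[OF finV LV] by linarith
  then obtain a c where "a \<in> L" "c \<in> L" "a \<noteq> c"
    using card_le_Suc0_iff_eq[OF finL] by auto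
  moreover have "card (incident E v) = 1" if "v \<in> L" for v
    using that deg_pos by (force simp: L_def)
  ultimately show ?thesis using that LV by blast
qed

lemma LOT_leaves_same_edge:
  assumes LOT: "is_LOT V E" and a: "a \<in> V" and "a \<noteq> c"
    and ea: "incident E a = {e}" and ec: "incident E c = {e}"
  shows "V = {a, c}"
proof -
  have a_e: "e \<in> E \<and> a \<in> ends e \<and> (\<forall>e' \<in> E. a \<in> ends e' \<longrightarrow> e' = e)"
    using incident_eq_singleton_iff[THEN iffD1, OF ea] .
  have c_e: "e \<in> E \<and> c \<in> ends e \<and> (\<forall>e' \<in> E. c \<in> ends e' \<longrightarrow> e' = e)"
    using incident_eq_singleton_iff[THEN iffD1, OF ec] .
  from a_e c_e have ends: "ends e = {a, c}"
    using \<open>a \<noteq> c\<close> unfolding ends_def by blast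
  have "c \<in> V" using c_e LOT_ends(1)[OF LOT] by blast
  moreover have "V \<subseteq> {a, c}"
  proof
    fix u assume "u \<in> V"
    then have "(a, u) \<in> (LOT_adjacent E)\<^sup>*"
      by (rule LOT_connected[OF LOT a])
    then show "u \<in> {a, c}"
    proof (induct rule: rtrancl_induct)
      case (step y z)
      then obtain e' where "e' \<in> E" "y \<in> ends e'" "z \<in> ends e'"
        by (meson LOT_adjacent_incident)
      then show ?case using step(3) a_e c_e ends by auto
    qed simp
  qed
  ultimately show ?thesis using a by blast
qed

lemma LOT_two_leaves:
  assumes LOT: "is_LOT V E" and V3: "3 \<le> card V"
  obtains a c e1 e2 where "a \<in> V" "c \<in> V" "a \<noteq> c" "e1 \<noteq> e2"
    "incident E a = {e1}" "incident E c = {e2}"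
proof -
  have "2 \<le> card V" using V3 by simp
  then obtain a c where "a \<in> V" "c \<in> V" "a \<noteq> c" "card (incident E a) = 1" "card (incident E c) = 1"
    by (rule LOT_two_leaves_exist[OF LOT])
  moreover from this obtain e1 e2 where "incident E a = {e1}" "incident E c = {e2}"
    by (auto simp: card_1_singleton_iff)
  moreover have "e1 \<noteq> e2"
  proof
    assume "e1 = e2"
    then have "V = {a, c}" using calculation LOT_leaves_same_edge[OF LOT] by simp
    then show False using V3 by (simp add: card_insert_if split: if_splits)
  qed
  ultimately show ?thesis using that by blast
qed

section \<open>Largeness via a permutational wreath product\<close>

definition point_stabiliser ::
    "('g, 'b) monoid_scheme \<Rightarrow> ('g \<Rightarrow> ('p \<Rightarrow> 'h) \<times> ('p \<Rightarrow> 'p)) \<Rightarrow> 'p \<Rightarrow> 'g set" where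
  "point_stabiliser G \<Phi> x\<^sub>0 = {A \<in> carrier G. snd (\<Phi> A) x\<^sub>0 = x\<^sub>0}"

context
  fixes G :: "('g, 'b) monoid_scheme" and H :: "('h, 'm) monoid_scheme" and \<Omega> :: "'p set"
    and \<Phi> :: "'g \<Rightarrow> ('p \<Rightarrow> 'h) \<times> ('p \<Rightarrow> 'p)" and x\<^sub>0 :: 'p
  assumes G: "group G" and H: "group H" and \<Phi>: "\<Phi> \<in> hom G (wreath H \<Omega>)"
begin

interpretation G: group G by (rule G)
interpretation \<Phi>: group_hom G "wreath H \<Omega>" \<Phi>
  by (intro group_hom.intro group_hom_axioms.intro G group_wreath H \<Phi>)

lemma snd_wreath_inv_comp:
  "k \<in> carrier (wreath H \<Omega>) \<Longrightarrow> snd (inv\<^bsub>wreath H \<Omega>\<^esub> k) \<circ> snd k = id"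
  using \<Phi>.H.r_inv[of k] by (simp add: wreath_mult wreath_one)

lemma subgroup_point_stabiliser: "subgroup (point_stabiliser G \<Phi> x\<^sub>0) G"
proof (rule G.subgroupI)
  show "point_stabiliser G \<Phi> x\<^sub>0 \<noteq> {}"
    using \<Phi>.hom_one by (force simp: point_stabiliser_def wreath_one)
next
  fix A assume "A \<in> point_stabiliser G \<Phi> x\<^sub>0"
  then show "inv\<^bsub>G\<^esub> A \<in> point_stabiliser G \<Phi> x\<^sub>0"
    using fun_cong[OF snd_wreath_inv_comp[of "\<Phi> A"], of x\<^sub>0]
    by (simp add: point_stabiliser_def \<Phi>.hom_inv)
qed (auto simp: point_stabiliser_def wreath_mult)

lemma point_stabiliser_rcos:
  assumes A: "A \<in> carrier G"
  shows "point_stabiliser G \<Phi> x\<^sub>0 #>\<^bsub>G\<^esub> A = {B \<in> carrier G. snd (\<Phi> B) x\<^sub>0 = snd (\<Phi> A) x\<^sub>0}"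
proof (intro equalityI subsetI)
  fix B assume "B \<in> point_stabiliser G \<Phi> x\<^sub>0 #>\<^bsub>G\<^esub> A"
  then show "B \<in> {B \<in> carrier G. snd (\<Phi> B) x\<^sub>0 = snd (\<Phi> A) x\<^sub>0}"
    using A by (auto simp: r_coset_def point_stabiliser_def wreath_mult)
next
  fix B assume "B \<in> {B \<in> carrier G. snd (\<Phi> B) x\<^sub>0 = snd (\<Phi> A) x\<^sub>0}"
  then have B: "B \<in> carrier G" and Bx: "snd (\<Phi> B) x\<^sub>0 = snd (\<Phi> A) x\<^sub>0" by auto
  have "snd (\<Phi> (B \<otimes>\<^bsub>G\<^esub> inv\<^bsub>G\<^esub> A)) x\<^sub>0 = snd (inv\<^bsub>wreath H \<Omega>\<^esub> (\<Phi> A)) (snd (\<Phi> A) x\<^sub>0)"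
    using A B Bx by (simp add: \<Phi>.hom_inv wreath_mult)
  also have "\<dots> = x\<^sub>0"
    using A fun_cong[OF snd_wreath_inv_comp[of "\<Phi> A"], of x\<^sub>0] by simp
  finally have "B \<otimes>\<^bsub>G\<^esub> inv\<^bsub>G\<^esub> A \<in> point_stabiliser G \<Phi> x\<^sub>0"
    using A B by (simp add: point_stabiliser_def)
  moreover have "B = (B \<otimes>\<^bsub>G\<^esub> inv\<^bsub>G\<^esub> A) \<otimes>\<^bsub>G\<^esub> A"
    using A B by (simp add: G.m_assoc)
  ultimately show "B \<in> point_stabiliser G \<Phi> x\<^sub>0 #>\<^bsub>G\<^esub> A"
    unfolding r_coset_def by blast
qed

text \<open>A right coset of the stabiliser is determined by the image of \<open>x\<^sub>0\<close>, a point of \<open>\<Omega>\<close>.\<close>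
lemma finite_rcosets_point_stabiliser:
  assumes "finite \<Omega>" and "x\<^sub>0 \<in> \<Omega>"
  shows "finite (rcosets\<^bsub>G\<^esub> point_stabiliser G \<Phi> x\<^sub>0)"
proof (rule finite_subset)
  show "rcosets\<^bsub>G\<^esub> point_stabiliser G \<Phi> x\<^sub>0 \<subseteq> (\<lambda>z. {B \<in> carrier G. snd (\<Phi> B) x\<^sub>0 = z}) ` \<Omega>"
  proof
    fix C assume "C \<in> rcosets\<^bsub>G\<^esub> point_stabiliser G \<Phi> x\<^sub>0"
    then obtain A where A: "A \<in> carrier G" and C: "C = point_stabiliser G \<Phi> x\<^sub>0 #>\<^bsub>G\<^esub> A"
      by (auto simp: RCOSETS_def)
    have "snd (\<Phi> A) x\<^sub>0 \<in> \<Omega>" using A assms(2) \<Phi>.hom_closed[OF A] by (auto simp: wreath_carrier)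
    then show "C \<in> (\<lambda>z. {B \<in> carrier G. snd (\<Phi> B) x\<^sub>0 = z}) ` \<Omega>"
      using point_stabiliser_rcos[OF A] C by auto
  qed
qed (use assms(1) in simp)

lemma point_stabiliser_coordinate_hom:
  "(\<lambda>A. fst (\<Phi> A) x\<^sub>0) \<in> hom (G\<lparr>carrier := point_stabiliser G \<Phi> x\<^sub>0\<rparr>) H"
  by (rule homI) (use \<Phi>.hom_closed in \<open>auto simp: point_stabiliser_def wreath_mult wreath_carrier\<close>)

end

lemma large_if_point_stabiliser_onto_free_group:
  fixes S :: "nat set" and \<Phi> :: "'g \<Rightarrow> ('p \<Rightarrow> nat word) \<times> ('p \<Rightarrow> 'p)"
  assumes G: "group G" and \<Phi>: "\<Phi> \<in> hom G (wreath (free_group S) \<Omega>)"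
    and "finite \<Omega>" and "x\<^sub>0 \<in> \<Omega>" and "a \<in> S" "b \<in> S" "a \<noteq> b"
    and letters: "\<forall>s \<in> S. \<exists>A \<in> carrier G. snd (\<Phi> A) x\<^sub>0 = x\<^sub>0 \<and> fst (\<Phi> A) x\<^sub>0 = [(s, False)]"
  shows "large G"
proof -
  let ?H = "point_stabiliser G \<Phi> x\<^sub>0" and ?\<psi> = "\<lambda>A. fst (\<Phi> A) x\<^sub>0"
  note F = group_free_group[of S]
  have hom: "?\<psi> \<in> hom (G\<lparr>carrier := ?H\<rparr>) (free_group S)"
    by (rule point_stabiliser_coordinate_hom[OF G F \<Phi>])
  interpret \<psi>: group_hom "G\<lparr>carrier := ?H\<rparr>" "free_group S" ?\<psi>
    by (intro group_hom.intro group_hom_axioms.intro F hom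
        group.subgroup_imp_group[OF G subgroup_point_stabiliser[OF G F \<Phi>]])
  have "carrier (free_group S) \<subseteq> ?\<psi> ` ?H"
  proof (rule free_group_generated_by_letters)
    show "subgroup (?\<psi> ` ?H) (free_group S)"
      using \<psi>.img_is_subgroup by simp
    show "[(s, False)] \<in> ?\<psi> ` ?H" if "s \<in> S" for s
      using letters that by (force simp: point_stabiliser_def)
  qed
  moreover have "?\<psi> ` ?H \<subseteq> carrier (free_group S)"
    using hom by (auto simp: hom_def)
  ultimately show ?thesis
    using assms subgroup_point_stabiliser[OF G F \<Phi>] finite_rcosets_point_stabiliser[OF G F \<Phi>] hom
    unfolding large_def by blast
qed

lemma LOT_relator_letters: "fst ` set (LOT_relator (x, w, y)) = insert x (insert y (fst ` set w))"
  by (auto simp: LOT_relator_def inv_word_append image_Un)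

lemma LOT_relator_letters_subset:
  assumes "is_LOT V E" and "r \<in> LOT_relator ` E"
  shows "fst ` set r \<subseteq> V"
proof -
  obtain x w y where "(x, w, y) \<in> E" and "r = LOT_relator (x, w, y)" using assms(2) by auto
  then show ?thesis using LOT_edge[OF assms(1)] by (simp add: LOT_relator_letters)
qed

lemma group_LOT_group: "is_LOT V E \<Longrightarrow> group (LOT_group V E)"
  unfolding LOT_group_def by (rule group_presented_group) (rule LOT_relator_letters_subset)

lemma LOT_group_hom_to_involutions:
  assumes LOT: "is_LOT V E" and K: "group K"
    and s: "\<And>v. s v \<in> carrier K" and involution: "\<And>v. s v \<otimes>\<^bsub>K\<^esub> s v = \<one>\<^bsub>K\<^esub>"
    and edges: "\<forall>(x, w, y) \<in> E. \<exists>m. coxeter_label (x, w, y) m \<and> (s y \<otimes>\<^bsub>K\<^esub> s x) [^]\<^bsub>K\<^esub> m = \<one>\<^bsub>K\<^esub>"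
  shows "presented_lift K s \<in> hom (LOT_group V E) K"
    and "w \<in> carrier (free_group V) \<Longrightarrow>
      \<exists>A \<in> carrier (LOT_group V E). presented_lift K s A = eval_word K s w"
proof -
  have rels: "\<forall>r \<in> LOT_relator ` E. fst ` set r \<subseteq> V \<and> eval_word K s r = \<one>\<^bsub>K\<^esub>"
  proof
    fix r assume "r \<in> LOT_relator ` E"
    then obtain x w y where e: "(x, w, y) \<in> E" and r: "r = LOT_relator (x, w, y)" by auto
    then obtain m where "coxeter_label (x, w, y) m" "(s y \<otimes>\<^bsub>K\<^esub> s x) [^]\<^bsub>K\<^esub> m = \<one>\<^bsub>K\<^esub>"
      using edges by blast
    then show "fst ` set r \<subseteq> V \<and> eval_word K s r = \<one>\<^bsub>K\<^esub>"
      using LOT_relator_letters_subset[OF LOT \<open>r \<in> LOT_relator ` E\<close>]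
        group.eval_word_LOT_relator[OF K s involution] by (simp add: r)
  qed
  show "presented_lift K s \<in> hom (LOT_group V E) K"
    unfolding LOT_group_def by (rule presented_lift_hom[OF K s rels])
  show "\<exists>A \<in> carrier (LOT_group V E). presented_lift K s A = eval_word K s w"
    if "w \<in> carrier (free_group V)"
    using presented_lift_coset[OF K s rels that] that
    by (auto simp: LOT_group_def presented_group_carrier)
qed

lemma (in group) leaf_assignment_edge_relation:
  assumes leaves: "incident E a = {e\<^sub>1}" "incident E c = {e\<^sub>2}" "e\<^sub>1 \<noteq> e\<^sub>2"
    and gens: "A \<in> carrier G" "B \<in> carrier G" "C \<in> carrier G"
    and involutions: "A \<otimes> A = \<one>" "B \<otimes> B = \<one>" "C \<otimes> C = \<one>"
    and AB: "coxeter_label e\<^sub>1 p" "(A \<otimes> B) [^] p = \<one>"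
    and CB: "coxeter_label e\<^sub>2 q" "(C \<otimes> B) [^] q = \<one>"
    and labelled: "\<exists>m. coxeter_label (x, w, y) m" and e: "(x, w, y) \<in> E"
  defines "s \<equiv> \<lambda>v. if v = a then A else if v = c then C else B"
  shows "\<exists>m. coxeter_label (x, w, y) m \<and> (s y \<otimes> s x) [^] m = \<one>"
proof -
  have a_only: "(x, w, y) = e\<^sub>1" if "a \<in> {x, y}"
    using leaves(1) e that by (auto simp: incident_eq_singleton_iff ends_def)
  have c_only: "(x, w, y) = e\<^sub>2" if "c \<in> {x, y}"
    using leaves(2) e that by (auto simp: incident_eq_singleton_iff ends_def)
  consider "(x, w, y) = e\<^sub>1" | "(x, w, y) = e\<^sub>2" | "a \<notin> {x, y}" "c \<notin> {x, y}"
    using a_only c_only by blast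
  then show ?thesis
  proof cases
    case 1
    then have "s x \<in> {A, B}" "s y \<in> {A, B}"
      using c_only leaves(3) by (auto simp: s_def)
    then show ?thesis
      using 1 AB gens involutions involutions_pair_pow by blast
  next
    case 2
    then have "s x \<in> {C, B}" "s y \<in> {C, B}"
      using a_only leaves(3) by (auto simp: s_def)
    then show ?thesis
      using 2 CB gens involutions involutions_pair_pow by blast
  next
    case 3
    then have "s y \<otimes> s x = \<one>" using involutions by (auto simp: s_def)
    then show ?thesis using labelled by simp
  qed
qed

lemma leaf_assignment_hom:
  fixes p q :: nat
  assumes LOT: "is_LOT V E"
    and leaves: "incident E a = {e\<^sub>1}" "incident E c = {e\<^sub>2}" "e\<^sub>1 \<noteq> e\<^sub>2"
    and p: "coxeter_label e\<^sub>1 p" "3 \<le> p" and q: "coxeter_label e\<^sub>2 q" "3 \<le> q"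
    and labelled: "\<forall>e \<in> E. \<exists>m. coxeter_label e m"
  defines "s \<equiv> \<lambda>v. if v = a then gen_a p q else if v = c then gen_c p q else gen_b p q"
  shows "presented_lift (wreath F2 (torus p q)) s \<in> hom (LOT_group V E) (wreath F2 (torus p q))"
    and "w \<in> carrier (free_group V) \<Longrightarrow> \<exists>A \<in> carrier (LOT_group V E).
      presented_lift (wreath F2 (torus p q)) s A = eval_word (wreath F2 (torus p q)) s w"
proof -
  let ?K = "wreath F2 (torus p q)"
  interpret K: group ?K by (intro group_wreath group_free_group)
  have pq: "3 \<le> int p" "3 \<le> int q" using p q by simp_all
  note gens = gen_a_in_carrier[OF pq] gen_b_in_carrier[OF pq] gen_c_in_carrier[OF pq]
    gen_a_relations[OF pq] gen_b_involution[OF pq] gen_c_relations[OF pq]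
  have s_carrier: "\<And>v. s v \<in> carrier ?K" and s_involution: "\<And>v. s v \<otimes>\<^bsub>?K\<^esub> s v = \<one>\<^bsub>?K\<^esub>"
    using gens by (simp_all add: s_def)
  have "\<forall>(x, w, y) \<in> E. \<exists>m. coxeter_label (x, w, y) m \<and> (s y \<otimes>\<^bsub>?K\<^esub> s x) [^]\<^bsub>?K\<^esub> m = \<one>\<^bsub>?K\<^esub>"
  proof clarify
    fix x w y assume e: "(x, w, y) \<in> E"
    then have "\<exists>m. coxeter_label (x, w, y) m" using labelled by blast
    then show "\<exists>m. coxeter_label (x, w, y) m \<and> (s y \<otimes>\<^bsub>?K\<^esub> s x) [^]\<^bsub>?K\<^esub> m = \<one>\<^bsub>?K\<^esub>"
      unfolding s_def using gens(5,8) p(1) q(1)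
      by (intro K.leaf_assignment_edge_relation[OF leaves gens(1-4,6,7) _ _ _ _ _ e]) simp_all
  qed
  from LOT_group_hom_to_involutions[OF LOT K.group_axioms s_carrier s_involution this]
  show "presented_lift ?K s \<in> hom (LOT_group V E) ?K"
    and "w \<in> carrier (free_group V) \<Longrightarrow>
      \<exists>A \<in> carrier (LOT_group V E). presented_lift ?K s A = eval_word ?K s w"
    by blast+
qed

lemma large_LOT_group_leaf_assignment:
  fixes p q :: nat
  assumes LOT: "is_LOT V E" and V: "a \<in> V" "b \<in> V" "c \<in> V" "b \<noteq> a" "b \<noteq> c" "c \<noteq> a"
    and leaves: "incident E a = {e\<^sub>1}" "incident E c = {e\<^sub>2}" "e\<^sub>1 \<noteq> e\<^sub>2"
    and p: "coxeter_label e\<^sub>1 p" "3 \<le> p" and q: "coxeter_label e\<^sub>2 q" "3 \<le> q"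
    and labelled: "\<forall>e \<in> E. \<exists>m. coxeter_label e m"
  shows "large (LOT_group V E)"
proof -
  define s where "s v = (if v = a then gen_a p q else if v = c then gen_c p q else gen_b p q)" for v
  let ?K = "wreath F2 (torus p q)"
    and ?w\<^sub>0 = "[(c, False), (a, False), (b, False), (c, False), (a, False)]"
    and ?w\<^sub>1 = "[(c, False), (a, False), (b, False), (c, False), (b, False), (c, False), (a, False),
      (b, False), (c, False)]"
  note \<Phi> = leaf_assignment_hom[OF LOT leaves p q labelled, folded s_def]
  have "?w\<^sub>0 \<in> carrier (free_group V)" "?w\<^sub>1 \<in> carrier (free_group V)"
    using V by (simp_all add: free_group_carrier fred_Cons red_cons_def cancels_def)
  then obtain A\<^sub>0 A\<^sub>1
    where "A\<^sub>0 \<in> carrier (LOT_group V E)" "presented_lift ?K s A\<^sub>0 = eval_word ?K s ?w\<^sub>0"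
    and "A\<^sub>1 \<in> carrier (LOT_group V E)" "presented_lift ?K s A\<^sub>1 = eval_word ?K s ?w\<^sub>1"
    using \<Phi>(2) by meson
  moreover have "s a = gen_a p q" "s b = gen_b p q" "s c = gen_c p q"
    using V by (simp_all add: s_def)
  moreover have "3 \<le> int p" "3 \<le> int q" using p q by simp_all
  ultimately have "\<forall>l \<in> {0, 1}. \<exists>A \<in> carrier (LOT_group V E).
      snd (presented_lift ?K s A) (0, 0) = (0, 0) \<and>
      fst (presented_lift ?K s A) (0, 0) = [(l, False)]"
    using gen_loops by (metis empty_iff insert_iff)
  moreover have "(0, 0) \<in> torus p q" using p q by (simp add: torus_def)
  ultimately show ?thesis
    by (intro large_if_point_stabiliser_onto_free_group[OF group_LOT_group[OF LOT] \<Phi>(1)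
          finite_torus, where a = 0 and b = 1]) simp_all
qed

theorem theorem4p1:
  fixes V :: "'a set" and E :: "('a \<times> 'a word \<times> 'a) set"
  assumes "is_LOT V E"
    and "coxeter_type E"
    and "card V \<ge> 3"
    and "\<forall>e \<in> E. \<exists>m. coxeter_label e m \<and> m \<ge> 3"
  shows "large (LOT_group V E)"
proof -
  obtain a c e\<^sub>1 e\<^sub>2 where ac: "a \<in> V" "c \<in> V" "c \<noteq> a"
    and leaves: "incident E a = {e\<^sub>1}" "incident E c = {e\<^sub>2}" "e\<^sub>1 \<noteq> e\<^sub>2"
    using LOT_two_leaves[OF assms(1,3)] by metis
  have "\<not> V \<subseteq> {a, c}"
    using assms(3) card_mono[of "{a, c}" V] ac(3) by auto
  then obtain b where "b \<in> V" "b \<noteq> a" "b \<noteq> c" by blast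
  moreover have "e\<^sub>1 \<in> E" "e\<^sub>2 \<in> E" using leaves by (simp_all add: incident_eq_singleton_iff)
  then obtain p q where "coxeter_label e\<^sub>1 p" "3 \<le> p" "coxeter_label e\<^sub>2 q" "3 \<le> q"
    using assms(4) by blast
  moreover have "\<forall>e \<in> E. \<exists>m. coxeter_label e m" using assms(4) by blast
  ultimately show ?thesis
    using large_LOT_group_leaf_assignment[OF assms(1)] ac leaves by blast
qed

end
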